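(* Suppose route sets $\mathbf R_s\in\mathcal R([e,\ell];\theta_s)$ and arrival-time vectors $\bm a_s\in\mathcal X(\mathbf R_s,[e,\ell];\theta_s)$, $s\in\mathcal S$, satisfy: (i) for every $i\in V_{\mathrm{cont}}$ and every $\beta\in\mathbb R$: either $a_{si}\le \beta+w_i/2$ for all $s$, or $a_{si}\ge \beta-w_i/2$ for all $s$; and (ii) for every $i\in V_{\mathrm{disc}}$ and every $b\in\{1,\dots,N_i-1\}$: either $a_{si}\le \bar y_{ib}$ for all $s$, or $a_{si}\ge \underline y_{i,b+1}$ for all $s$. Define $\tau^\star$ by: for $i\in V_{\mathrm{cont}}$, $\tau^\star_i=[y_i,y_i+w_i]$ with $y_i=\min\{\ell_i-w_i,\ \min_{s\in\mathcal S}a_{si}\}$; for $i\in V_{\mathrm{disc}}$, $\tau^\star_i=[\underline y_{ib_i},\bar y_{ib_i}]$ where $b_i$ is an index minimizing $\bar y_{ib}$ over $\{b\in\{1,\dots,N_i\}:\bar y_{ib}\ge\max_{s\in\mathcal S}a_{si}\}$. Then $\tau^\star_i\in TW_i$ for all $i\in V_C$, $\bm a_s\in\mathcal X(\mathbf R_s,\tau^\star;\theta_s)$ for all $s$, and $(\tau^\star,\{\mathbf R_s\}_{s\in\mathcal S})$ is a feasible TWAVRP solution.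
   Context: Let $G=(V,A)$ be a directed graph with $V=\{0,1,\dots,n\}$; node $0$ is the depot and $V_C=V\setminus\{0\}$ is the set of customers. The depot has operating window $[e_0,\ell_0]$, vehicles have capacity $Q$, and each customer $i\in V_C$ has an exogenous time window $[e_i,\ell_i]$. A vector of operational parameters $\theta$ consists of arc costs $c_{ij}\ge 0$ and arc travel times $t_{ij}\ge0$ for $(i,j)\in A$, and demands $q_i\ge 0$ and service times $u_i\ge 0$ for $i\in V_C$. The customer set is partitioned as $V_C=V_{\mathrm{cont}}\cup V_{\mathrm{disc}}$ (disjoint). For $i\in V_{\mathrm{cont}}$ a width $w_i\ge0$ with $e_i\le \ell_i-w_i$ is given and $TW_i=\{[y,y+w_i]: e_i\le y\le \ell_i-w_i\}$. For $i\in V_{\mathrm{disc}}$, $TW_i=\{[\underline y_{i1},\bar y_{i1}],\dots,[\underline y_{iN_i},\bar y_{iN_i}]\}$ is a finite set of intervals with $\underline y_{ib}\le\bar y_{ib}$, none contained in another, ordered so that $e_i=\underline y_{i1}<\dots<\underline y_{iN_i}$ and $\bar y_{i1}<\dots<\bar y_{iN_i}=\ell_i$. A route set $\mathbf R=(R_1,\dots,R_m)$ is a collection of pairwise disjoint nonempty sequences $R_k=(R_{k,1},\dots,R_{k,n_k})$ of distinct customers (every customer with positive demand appearing in exactly one sequence). For a vector $\tau=(\tau_1,\dots,\tau_n)$ of closed intervals, $\mathcal X(\mathbf R,\tau;\theta)$ is the set of $\bm a\in\mathbb R^n_{\ge0}$ with: $a_{R_{k,1}}\ge e_0+t_{0,R_{k,1}}$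 for all $k$; $a_{R_{k,l+1}}-a_{R_{k,l}}\ge t_{R_{k,l},R_{k,l+1}}+u_{R_{k,l}}$ for all $k$ and $1\le l\le n_k-1$; $a_{R_{k,n_k}}\le \ell_0-t_{R_{k,n_k},0}-u_{R_{k,n_k}}$ for all $k$; and $a_i\in\tau_i$ for all $i\in V_C$. We write $\mathbf R\in\mathcal R(\tau;\theta)$ if $\sum_{i\in R_k}q_i\le Q$ for every $k$ and $\mathcal X(\mathbf R,\tau;\theta)\neq\emptyset$. Finitely many scenarios $\theta_1,\dots,\theta_S$ are given, $\mathcal S=\{1,\dots,S\}$. A feasible TWAVRP solution is a pair $(\tau,\{\mathbf R_s\}_{s\in\mathcal S})$ with $\tau_i\in TW_i$ for all $i\in V_C$ and $\mathbf R_s\in\mathcal R(\tau;\theta_s)$ for all $s$. $[e,\ell]$ denotes the vector $([e_1,\ell_1],\dots,[e_n,\ell_n])$, and $a_{si}$ denotes the $i$-th component of $\bm a_s$. *)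

theory Defs
  imports Complex_Main
begin

text \<open>Operational parameters theta: arc costs c, travel times t, demands q, service times u.
  Nodes are natural numbers; node 0 is the depot, customers are 1..n.\<close>
record theta =
  cst :: "nat \<Rightarrow> nat \<Rightarrow> real"
  trv :: "nat \<Rightarrow> nat \<Rightarrow> real"
  dem :: "nat \<Rightarrow> real"
  srv :: "nat \<Rightarrow> real"

type_synonym interval = "real \<times> real"

definition in_ival :: "real \<Rightarrow> interval \<Rightarrow> bool" where
  "in_ival x I \<longleftrightarrow> fst I \<le> x \<and> x \<le> snd I"

definition TW :: "nat set \<Rightarrow> (nat \<Rightarrow> real) \<Rightarrow> (nat \<Rightarrow> real) \<Rightarrow> (nat \<Rightarrow> real)
    \<Rightarrow> (nat \<Rightarrow> nat) \<Rightarrow> (nat \<Rightarrow> nat \<Rightarrow> real) \<Rightarrow> (nat \<Rightarrow> nat \<Rightarrow> real) \<Rightarrow> nat \<Rightarrow> interval set" where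
  "TW Vcont e l w N ylo yhi i =
     (if i \<in> Vcont then {(y, y + w i) | y. e i \<le> y \<and> y \<le> l i - w i}
      else {(ylo i b, yhi i b) | b. b \<in> {1..N i}})"

definition route_set :: "nat \<Rightarrow> theta \<Rightarrow> nat list list \<Rightarrow> bool" where
  "route_set n \<theta> R \<longleftrightarrow>
     (\<forall>r\<in>set R. r \<noteq> [] \<and> distinct r \<and> set r \<subseteq> {1..n}) \<and>
     (\<forall>k<length R. \<forall>k'<length R. k \<noteq> k' \<longrightarrow> set (R!k) \<inter> set (R!k') = {}) \<and>
     (\<forall>i\<in>{1..n}. dem \<theta> i > 0 \<longrightarrow> (\<exists>r\<in>set R. i \<in> set r))"

text \<open>The set X(R, tau; theta) of feasible arrival-time vectors (a : nat => real, only the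
  components 1..n matter). e0 = e 0 and l0 = l 0 is the depot window.\<close>
definition Xset :: "nat \<Rightarrow> (nat \<Rightarrow> real) \<Rightarrow> (nat \<Rightarrow> real) \<Rightarrow> nat list list \<Rightarrow> (nat \<Rightarrow> interval)
    \<Rightarrow> theta \<Rightarrow> (nat \<Rightarrow> real) set" where
  "Xset n e l R \<tau> \<theta> = {a.
     (\<forall>i\<in>{1..n}. a i \<ge> 0) \<and>
     (\<forall>r\<in>set R. a (hd r) \<ge> e 0 + trv \<theta> 0 (hd r)) \<and>
     (\<forall>r\<in>set R. \<forall>k. k + 1 < length r \<longrightarrow>
          a (r!(k+1)) - a (r!k) \<ge> trv \<theta> (r!k) (r!(k+1)) + srv \<theta> (r!k)) \<and>
     (\<forall>r\<in>set R. a (last r) \<le> l 0 - trv \<theta> (last r) 0 - srv \<theta> (last r)) \<and>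
     (\<forall>i\<in>{1..n}. in_ival (a i) (\<tau> i))}"

definition Rfeas :: "nat \<Rightarrow> real \<Rightarrow> (nat \<Rightarrow> real) \<Rightarrow> (nat \<Rightarrow> real) \<Rightarrow> nat list list
    \<Rightarrow> (nat \<Rightarrow> interval) \<Rightarrow> theta \<Rightarrow> bool" where
  "Rfeas n Q e l R \<tau> \<theta> \<longleftrightarrow> route_set n \<theta> R \<and>
     (\<forall>r\<in>set R. sum_list (map (dem \<theta>) r) \<le> Q) \<and> Xset n e l R \<tau> \<theta> \<noteq> {}"

definition twavrp_feasible :: "nat \<Rightarrow> real \<Rightarrow> (nat \<Rightarrow> real) \<Rightarrow> (nat \<Rightarrow> real)
    \<Rightarrow> nat set \<Rightarrow> (nat \<Rightarrow> real) \<Rightarrow> (nat \<Rightarrow> nat) \<Rightarrow> (nat \<Rightarrow> nat \<Rightarrow> real) \<Rightarrow> (nat \<Rightarrow> nat \<Rightarrow> real)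
    \<Rightarrow> nat \<Rightarrow> (nat \<Rightarrow> theta) \<Rightarrow> (nat \<Rightarrow> interval) \<Rightarrow> (nat \<Rightarrow> nat list list) \<Rightarrow> bool" where
  "twavrp_feasible n Q e l Vcont w N ylo yhi S \<Theta> \<tau> Rs \<longleftrightarrow>
     (\<forall>i\<in>{1..n}. \<tau> i \<in> TW Vcont e l w N ylo yhi i) \<and>
     (\<forall>s\<in>{1..S}. Rfeas n Q e l (Rs s) \<tau> (\<Theta> s))"

end

theory Submission
  imports Defs
begin

text \<open>Feasibility of routes and arrival times depends on the windows only through the
  constraints a i \<in> \<tau> i. So it suffices to show that, for every customer, the window of
  \<tau>* is admissible and contains the arrival times of all scenarios. For a continuous
  customer condition (i) with \<beta> the midpoint of the arrival times shows that they spread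
  over at most w i, so a window of width w i starting at their minimum (pushed left to
  l i - w i if necessary) covers them. For a discrete customer the chosen window b i
  ends after every arrival; if some arrival preceded its start, condition (ii) for b i - 1
  would force all arrivals before yhi (b i - 1) < yhi (b i), contradicting minimality.\<close>

lemma Xset_change_windows:
  assumes "a \<in> Xset n e l R \<tau> \<theta>" and "\<forall>i\<in>{1..n}. in_ival (a i) (\<tau>' i)"
  shows "a \<in> Xset n e l R \<tau>' \<theta>"
  using assms by (simp add: Xset_def)

lemma Rfeas_change_windows:
  assumes "Rfeas n Q e l R \<tau> \<theta>" and "a \<in> Xset n e l R \<tau>' \<theta>"
  shows "Rfeas n Q e l R \<tau>' \<theta>"
  using assms by (auto simp: Rfeas_def)

lemma Max_minus_Min_le_of_split:
  fixes X :: "real set"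
  assumes "finite X" "X \<noteq> {}"
    and split: "\<forall>\<beta>. (\<forall>x\<in>X. x \<le> \<beta> + w / 2) \<or> (\<forall>x\<in>X. \<beta> - w / 2 \<le> x)"
  shows "Max X - Min X \<le> w"
proof -
  have "Max X \<le> (Max X + Min X) / 2 + w / 2 \<or> (Max X + Min X) / 2 - w / 2 \<le> Min X"
    using split[rule_format, of "(Max X + Min X) / 2"] Max_in[OF assms(1,2)] Min_in[OF assms(1,2)]
    by blast
  then show ?thesis by (auto simp: field_simps)
qed

lemma shifted_min_window_covers:
  fixes X :: "real set"
  assumes "finite X" "X \<noteq> {}" and "Max X - Min X \<le> w" and "e \<le> l - w"
    and "\<forall>x\<in>X. e \<le> x \<and> x \<le> l"
  defines "y \<equiv> min (l - w) (Min X)"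
  shows "e \<le> y \<and> y \<le> l - w \<and> (\<forall>x\<in>X. y \<le> x \<and> x \<le> y + w)"
proof -
  have "e \<le> Min X" "Max X \<le> l" using assms(5) Min_in[OF assms(1,2)] Max_in[OF assms(1,2)] by auto
  moreover have "\<forall>x\<in>X. Min X \<le> x \<and> x \<le> Max X" using assms(1) by auto
  ultimately show ?thesis using assms(3,4) unfolding y_def by (auto simp: min_def)
qed

lemma least_covering_window_covers:
  fixes X :: "real set" and ylo yhi :: "nat \<Rightarrow> real"
  assumes "finite X" "X \<noteq> {}" and mono: "strict_mono_on {1..N} yhi"
    and b: "b \<in> {1..N}" "Max X \<le> yhi b"
    and least: "\<forall>b'\<in>{1..N}. Max X \<le> yhi b' \<longrightarrow> yhi b \<le> yhi b'"
    and first: "\<forall>x\<in>X. ylo 1 \<le> x"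
    and split: "\<forall>b'\<in>{1..<N}. (\<forall>x\<in>X. x \<le> yhi b') \<or> (\<forall>x\<in>X. ylo (b' + 1) \<le> x)"
  shows "\<forall>x\<in>X. ylo b \<le> x \<and> x \<le> yhi b"
proof -
  have "ylo b \<le> x" if "x \<in> X" for x
  proof (cases "b = 1")
    case True
    then show ?thesis using first that by simp
  next
    case False
    then have b': "b - 1 \<in> {1..<N}" "b - 1 + 1 = b" using b(1) by auto
    have "\<not> (\<forall>x\<in>X. x \<le> yhi (b - 1))"
    proof
      assume "\<forall>x\<in>X. x \<le> yhi (b - 1)"
      then have "yhi b \<le> yhi (b - 1)"
        using least b'(1) Max_in[OF assms(1,2)] by auto
      moreover have "yhi (b - 1) < yhi b"
        using mono b(1) b' by (auto simp: strict_mono_on_def)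
      ultimately show False by simp
    qed
    then show ?thesis using split b' that by metis
  qed
  moreover have "x \<le> yhi b" if "x \<in> X" for x
    using b(2) Max_ge[OF assms(1) that] by linarith
  ultimately show ?thesis by blast
qed

theorem mainTheorem2:
  fixes n S :: nat and Q :: real
    and A :: "(nat \<times> nat) set"
    and e l w :: "nat \<Rightarrow> real"
    and Vcont Vdisc :: "nat set"
    and N :: "nat \<Rightarrow> nat" and ylo yhi :: "nat \<Rightarrow> nat \<Rightarrow> real"
    and \<Theta> :: "nat \<Rightarrow> theta"
    and Rs :: "nat \<Rightarrow> nat list list"
    and as :: "nat \<Rightarrow> nat \<Rightarrow> real"
    and bi :: "nat \<Rightarrow> nat"
    and \<tau>s :: "nat \<Rightarrow> interval"
  assumes S_pos: "S \<ge> 1"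
    and A_sub: "A \<subseteq> {0..n} \<times> {0..n}"
    and params_nonneg: "\<forall>s\<in>{1..S}. (\<forall>(i,j)\<in>A. cst (\<Theta> s) i j \<ge> 0 \<and> trv (\<Theta> s) i j \<ge> 0) \<and>
                          (\<forall>i\<in>{1..n}. dem (\<Theta> s) i \<ge> 0 \<and> srv (\<Theta> s) i \<ge> 0)"
    and partition: "Vcont \<union> Vdisc = {1..n}" "Vcont \<inter> Vdisc = {}"
    and cont_ok: "\<forall>i\<in>Vcont. w i \<ge> 0 \<and> e i \<le> l i - w i"
    and disc_ok: "\<forall>i\<in>Vdisc. N i \<ge> 1 \<and>
                     (\<forall>b\<in>{1..N i}. ylo i b \<le> yhi i b) \<and>
                     strict_mono_on {1..N i} (ylo i) \<and> strict_mono_on {1..N i} (yhi i) \<and>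
                     ylo i 1 = e i \<and> yhi i (N i) = l i"
    and R_feas: "\<forall>s\<in>{1..S}. Rfeas n Q e l (Rs s) (\<lambda>i. (e i, l i)) (\<Theta> s)"
    and a_feas: "\<forall>s\<in>{1..S}. as s \<in> Xset n e l (Rs s) (\<lambda>i. (e i, l i)) (\<Theta> s)"
    and cond_i: "\<forall>i\<in>Vcont. \<forall>\<beta>::real. (\<forall>s\<in>{1..S}. as s i \<le> \<beta> + w i / 2) \<or>
                                      (\<forall>s\<in>{1..S}. as s i \<ge> \<beta> - w i / 2)"
    and cond_ii: "\<forall>i\<in>Vdisc. \<forall>b\<in>{1..<N i}. (\<forall>s\<in>{1..S}. as s i \<le> yhi i b) \<or>
                                          (\<forall>s\<in>{1..S}. as s i \<ge> ylo i (b + 1))"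
    and bi_min: "\<forall>i\<in>Vdisc. bi i \<in> {1..N i} \<and> yhi i (bi i) \<ge> Max ((\<lambda>s. as s i) ` {1..S}) \<and>
                   (\<forall>b\<in>{1..N i}. yhi i b \<ge> Max ((\<lambda>s. as s i) ` {1..S}) \<longrightarrow> yhi i (bi i) \<le> yhi i b)"
    and tau_cont: "\<forall>i\<in>Vcont. \<tau>s i =
                     (let y = min (l i - w i) (Min ((\<lambda>s. as s i) ` {1..S})) in (y, y + w i))"
    and tau_disc: "\<forall>i\<in>Vdisc. \<tau>s i = (ylo i (bi i), yhi i (bi i))"
  shows "(\<forall>i\<in>{1..n}. \<tau>s i \<in> TW Vcont e l w N ylo yhi i) \<and>
         (\<forall>s\<in>{1..S}. as s \<in> Xset n e l (Rs s) \<tau>s (\<Theta> s)) \<and>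
         twavrp_feasible n Q e l Vcont w N ylo yhi S \<Theta> \<tau>s Rs"
proof -
  have window: "\<tau>s i \<in> TW Vcont e l w N ylo yhi i \<and> (\<forall>s\<in>{1..S}. in_ival (as s i) (\<tau>s i))"
    if i: "i \<in> {1..n}" for i
  proof -
    let ?X = "(\<lambda>s. as s i) ` {1..S}"
    have X: "finite ?X" "?X \<noteq> {}" using S_pos by auto
    have within: "\<forall>x\<in>?X. e i \<le> x \<and> x \<le> l i"
      using a_feas i by (auto simp: Xset_def in_ival_def)
    show ?thesis
    proof (cases "i \<in> Vcont")
      case True
      have "Max ?X - Min ?X \<le> w i"
        using Max_minus_Min_le_of_split[OF X] cond_i True by auto
      then show ?thesis
        using shifted_min_window_covers[OF X _ _ within] cont_ok tau_cont True
        by (auto simp: TW_def in_ival_def Let_def)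
    next
      case False
      then have "i \<in> Vdisc" using partition i by auto
      then have "\<forall>x\<in>?X. ylo i (bi i) \<le> x \<and> x \<le> yhi i (bi i)"
        using least_covering_window_covers[OF X, of "N i" "yhi i" "bi i" "ylo i"]
          disc_ok bi_min cond_ii within by auto
      then show ?thesis
        using False bi_min tau_disc \<open>i \<in> Vdisc\<close> by (auto simp: TW_def in_ival_def)
    qed
  qed
  have X: "\<forall>s\<in>{1..S}. as s \<in> Xset n e l (Rs s) \<tau>s (\<Theta> s)"
    using a_feas window Xset_change_windows by blast
  moreover have "\<forall>s\<in>{1..S}. Rfeas n Q e l (Rs s) \<tau>s (\<Theta> s)"
    using R_feas X Rfeas_change_windows by blast
  ultimately show ?thesis using window by (simp add: twavrp_feasible_def)
qed

end
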